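(* Let $S'$ be a martingale on $2^{<\omega}$ with $\mathrm{Var}(S'\mid\bot)<\infty$, and let $c>S'(\bot)$. Then for every real $\hat c\ge 0$ there exists a martingale $S$ such that $S(\bot)<c$, $S(\rho)>S'(\rho)$ for all $\rho\in2^{<\omega}$, and for some $t\in\omega$, $S(\rho)>S'(\rho)+\hat c\sqrt{\mathrm{Var}(S'\mid\rho)}$ for all $\rho\in 2^t$.
   Context: A martingale is a function $S:2^{<\omega}\to\mathbb{R}^{\ge0}$ with $2S(\rho)=S(\rho0)+S(\rho1)$ for all $\rho$; $\bot$ is the empty string. For a martingale $S$ and $\rho\in2^{<\omega}$, $\mathrm{Var}(S\mid\rho)=\lim_{t\to\infty}2^{-(t-|\rho|)}\sum_{\sigma\in 2^t,\ \sigma\succeq\rho}(S(\sigma)-S(\rho))^2$. *)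

theory Defs
  imports "HOL-Analysis.Analysis" "HOL-Library.Sublist"
begin

text \<open>Binary strings 2^{<omega} are modelled as bool lists; the empty list is bot.
  rho0 = rho @ [False], rho1 = rho @ [True].\<close>

definition martingale :: "(bool list \<Rightarrow> real) \<Rightarrow> bool" where
  "martingale S \<longleftrightarrow> (\<forall>\<rho>. S \<rho> \<ge> 0) \<and>
     (\<forall>\<rho>. 2 * S \<rho> = S (\<rho> @ [False]) + S (\<rho> @ [True]))"

definition var_approx :: "(bool list \<Rightarrow> real) \<Rightarrow> bool list \<Rightarrow> nat \<Rightarrow> real" where
  "var_approx S \<rho> t = inverse (2 ^ (t - length \<rho>)) *
     (\<Sum>\<sigma>\<in>{\<sigma>. length \<sigma> = t \<and> prefix \<rho> \<sigma>}. (S \<sigma> - S \<rho>)\<^sup>2)"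

definition Var :: "(bool list \<Rightarrow> real) \<Rightarrow> bool list \<Rightarrow> ereal" where
  "Var S \<rho> = lim (\<lambda>t. ereal (var_approx S \<rho> t))"

end

theory Submission
  imports Defs
begin

text \<open>Increments of a martingale along disjoint stretches of a branch are orthogonal. Hence the
  normalised sums of squared increments below \<open>\<rho>\<close> increase to \<open>Var(S | \<rho>)\<close>, and the variance at
  the root splits into the part accumulated up to level \<open>t\<close> plus the mean of the conditional
  variances at level \<open>t\<close>. As \<open>Var(S' | \<bottom>)\<close> is finite, that mean tends to \<open>0\<close> as \<open>t\<close> grows,
  and by Cauchy-Schwarz so does the mean of the conditional standard deviations. So the
  martingale which equals \<open>\<epsilon>/2 + chat * sqrt (Var(S' | \<rho>))\<close> on level \<open>t\<close> (obtained by averaging above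
  that level and kept constant below it) starts below \<open>\<epsilon> = c - S'(\<bottom>)\<close> for large \<open>t\<close>, and
  adding it to \<open>S'\<close> gives \<open>S\<close>.\<close>

definition level :: "nat \<Rightarrow> bool list set" where
  "level n = {\<sigma>. length \<sigma> = n}"

lemma finite_level: "finite (level n)"
  using finite_lists_length_eq[of "UNIV :: bool set" n] by (simp add: level_def)

lemma card_level: "card (level n) = 2 ^ n"
  using card_lists_length_eq[of "UNIV :: bool set" n] by (simp add: level_def)

lemma level_0: "level 0 = {[]}"
  by (auto simp: level_def)

lemma sum_level_Suc_0: "(\<Sum>\<sigma>\<in>level (Suc 0). g \<sigma>) = g [False] + g [True]"
proof -
  have "level (Suc 0) = {[False], [True]}"
    by (auto simp: level_def length_Suc_conv)
  then show ?thesis by simp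
qed

lemma sum_level_add:
  "(\<Sum>\<sigma>\<in>level (m + n). g \<sigma>) = (\<Sum>\<rho>\<in>level m. \<Sum>\<tau>\<in>level n. g (\<rho> @ \<tau>))"
proof -
  have "(\<Sum>\<sigma>\<in>level (m + n). g \<sigma>) = (\<Sum>(\<rho>, \<tau>)\<in>level m \<times> level n. g (\<rho> @ \<tau>))"
    by (rule sum.reindex_bij_witness[of _ "\<lambda>(\<rho>, \<tau>). \<rho> @ \<tau>" "\<lambda>\<sigma>. (take m \<sigma>, drop m \<sigma>)"])
      (auto simp: level_def)
  then show ?thesis by (simp add: sum.cartesian_product)
qed

lemma martingale_sum_level:
  assumes "martingale S"
  shows "(\<Sum>\<tau>\<in>level n. S (\<rho> @ \<tau>)) = 2 ^ n * S \<rho>"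
proof (induction n)
  case 0
  then show ?case by (simp add: level_0)
next
  case (Suc n)
  have "(\<Sum>\<tau>\<in>level (Suc n). S (\<rho> @ \<tau>)) = (\<Sum>\<tau>\<in>level n. 2 * S (\<rho> @ \<tau>))"
    using assms unfolding Suc_eq_plus1 sum_level_add by (simp add: sum_level_Suc_0 martingale_def)
  then show ?case using Suc by (simp add: sum_distrib_left[symmetric])
qed

lemma martingale_add:
  assumes "martingale S" "martingale T"
  shows "martingale (\<lambda>\<rho>. S \<rho> + T \<rho>)"
  using assms by (auto simp: martingale_def add_nonneg_nonneg algebra_simps)

definition var_approx_rel :: "(bool list \<Rightarrow> real) \<Rightarrow> bool list \<Rightarrow> nat \<Rightarrow> real" where
  "var_approx_rel S \<rho> n = (\<Sum>\<tau>\<in>level n. (S (\<rho> @ \<tau>) - S \<rho>)\<^sup>2) / 2 ^ n"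

lemma var_approx_rel_nonneg: "0 \<le> var_approx_rel S \<rho> n"
  by (simp add: var_approx_rel_def sum_nonneg)

lemma var_approx_eq_rel: "var_approx S \<rho> (length \<rho> + n) = var_approx_rel S \<rho> n"
proof -
  have "(\<Sum>\<sigma>\<in>{\<sigma>. length \<sigma> = length \<rho> + n \<and> prefix \<rho> \<sigma>}. (S \<sigma> - S \<rho>)\<^sup>2)
      = (\<Sum>\<tau>\<in>level n. (S (\<rho> @ \<tau>) - S \<rho>)\<^sup>2)"
    by (rule sum.reindex_bij_witness[of _ "\<lambda>\<tau>. \<rho> @ \<tau>" "drop (length \<rho>)"])
      (auto simp: level_def prefix_def)
  then show ?thesis by (simp add: var_approx_def var_approx_rel_def field_simps)
qed

lemma sum_level_sq_dev:
  assumes "martingale S"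
  shows "(\<Sum>\<tau>\<in>level n. (S (\<rho> @ \<tau>) - x)\<^sup>2)
       = (\<Sum>\<tau>\<in>level n. (S (\<rho> @ \<tau>) - S \<rho>)\<^sup>2) + 2 ^ n * (S \<rho> - x)\<^sup>2"
proof -
  have "(\<Sum>\<tau>\<in>level n. (S (\<rho> @ \<tau>) - x)\<^sup>2)
      = (\<Sum>\<tau>\<in>level n. (S (\<rho> @ \<tau>) - S \<rho>)\<^sup>2 + 2 * (S \<rho> - x) * (S (\<rho> @ \<tau>) - S \<rho>) + (S \<rho> - x)\<^sup>2)"
    by (rule sum.cong) (auto simp: power2_eq_square algebra_simps)
  also have "\<dots> = (\<Sum>\<tau>\<in>level n. (S (\<rho> @ \<tau>) - S \<rho>)\<^sup>2)
      + 2 * (S \<rho> - x) * (\<Sum>\<tau>\<in>level n. S (\<rho> @ \<tau>) - S \<rho>) + 2 ^ n * (S \<rho> - x)\<^sup>2"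
    by (simp add: sum.distrib sum_distrib_left card_level)
  also have "(\<Sum>\<tau>\<in>level n. S (\<rho> @ \<tau>) - S \<rho>) = 0"
    by (simp add: sum_subtractf martingale_sum_level[OF assms] card_level)
  finally show ?thesis by simp
qed

lemma var_approx_rel_add:
  assumes "martingale S"
  shows "var_approx_rel S \<rho> (m + n)
       = var_approx_rel S \<rho> m + (\<Sum>\<sigma>\<in>level m. var_approx_rel S (\<rho> @ \<sigma>) n) / 2 ^ m"
proof -
  let ?X = "\<Sum>\<sigma>\<in>level m. var_approx_rel S (\<rho> @ \<sigma>) n"
  have "(\<Sum>\<tau>\<in>level (m + n). (S (\<rho> @ \<tau>) - S \<rho>)\<^sup>2)
      = (\<Sum>\<sigma>\<in>level m. \<Sum>\<tau>\<in>level n. (S ((\<rho> @ \<sigma>) @ \<tau>) - S \<rho>)\<^sup>2)"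
    by (simp add: sum_level_add)
  also have "\<dots> = (\<Sum>\<sigma>\<in>level m. 2 ^ n * var_approx_rel S (\<rho> @ \<sigma>) n + 2 ^ n * (S (\<rho> @ \<sigma>) - S \<rho>)\<^sup>2)"
  proof (rule sum.cong)
    fix \<sigma>
    show "(\<Sum>\<tau>\<in>level n. (S ((\<rho> @ \<sigma>) @ \<tau>) - S \<rho>)\<^sup>2)
        = 2 ^ n * var_approx_rel S (\<rho> @ \<sigma>) n + 2 ^ n * (S (\<rho> @ \<sigma>) - S \<rho>)\<^sup>2"
      using sum_level_sq_dev[OF assms, where \<rho> = "\<rho> @ \<sigma>" and x = "S \<rho>"] by (simp add: var_approx_rel_def)
  qed simp
  also have "\<dots> = 2 ^ n * ?X + 2 ^ n * (\<Sum>\<sigma>\<in>level m. (S (\<rho> @ \<sigma>) - S \<rho>)\<^sup>2)"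
    by (simp add: sum.distrib sum_distrib_left)
  finally have "var_approx_rel S \<rho> (m + n)
      = (2 ^ n * ?X + 2 ^ n * (\<Sum>\<sigma>\<in>level m. (S (\<rho> @ \<sigma>) - S \<rho>)\<^sup>2)) / (2 ^ n * 2 ^ m)"
    by (simp add: var_approx_rel_def power_add mult.commute)
  also have "\<dots> = var_approx_rel S \<rho> m + ?X / 2 ^ m"
    by (simp add: var_approx_rel_def field_simps)
  finally show ?thesis .
qed

lemma incseq_var_approx_rel:
  assumes "martingale S"
  shows "incseq (var_approx_rel S \<rho>)"
  unfolding incseq_def
proof (intro allI impI)
  fix m n :: nat assume "m \<le> n"
  then obtain k where "n = m + k" using le_Suc_ex by blast
  then show "var_approx_rel S \<rho> m \<le> var_approx_rel S \<rho> n"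
    by (simp add: var_approx_rel_add[OF assms] sum_nonneg var_approx_rel_nonneg)
qed

lemma Var_eq_SUP:
  assumes "martingale S"
  shows "Var S \<rho> = (SUP n. ereal (var_approx_rel S \<rho> n))"
proof -
  have "incseq (\<lambda>n. ereal (var_approx_rel S \<rho> n))"
    using incseq_var_approx_rel[OF assms] by (simp add: incseq_def)
  then have "(\<lambda>n. ereal (var_approx_rel S \<rho> n)) \<longlonglongrightarrow> (SUP n. ereal (var_approx_rel S \<rho> n))"
    by (rule LIMSEQ_SUP)
  then have "(\<lambda>n. ereal (var_approx S \<rho> (n + length \<rho>))) \<longlonglongrightarrow> (SUP n. ereal (var_approx_rel S \<rho> n))"
    by (simp only: add.commute[of _ "length \<rho>"] var_approx_eq_rel)
  then show ?thesis
    unfolding Var_def by (intro limI) (rule LIMSEQ_offset)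
qed

lemma var_approx_rel_le_Var:
  assumes "martingale S"
  shows "ereal (var_approx_rel S \<rho> n) \<le> Var S \<rho>"
  unfolding Var_eq_SUP[OF assms] by (rule SUP_upper) simp

lemma var_approx_rel_tendsto_Var:
  assumes "martingale S" "Var S \<rho> < \<infinity>"
  shows "var_approx_rel S \<rho> \<longlonglongrightarrow> real_of_ereal (Var S \<rho>)"
proof -
  have "Var S \<rho> \<noteq> - \<infinity>"
    using var_approx_rel_le_Var[OF assms(1), of \<rho> 0] by auto
  then obtain V where V: "Var S \<rho> = ereal V"
    using assms(2) by (cases "Var S \<rho>") auto
  have "(\<lambda>n. ereal (var_approx_rel S \<rho> n)) \<longlonglongrightarrow> Var S \<rho>"
    unfolding Var_eq_SUP[OF assms(1)]
    by (rule LIMSEQ_SUP) (use incseq_var_approx_rel[OF assms(1)] in \<open>simp add: incseq_def\<close>)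
  then show ?thesis
    unfolding V by simp
qed

lemma Var_nonneg:
  assumes "martingale S"
  shows "0 \<le> Var S \<rho>"
  using var_approx_rel_le_Var[OF assms, of \<rho> 0]
  by (simp add: var_approx_rel_def level_0 zero_ereal_def)

lemma Var_append_finite:
  assumes "martingale S" "Var S \<rho> < \<infinity>"
  shows "Var S (\<rho> @ \<sigma>) < \<infinity>"
proof -
  let ?m = "length \<sigma>"
  have "\<sigma> \<in> level ?m"
    by (simp add: level_def)
  have "var_approx_rel S (\<rho> @ \<sigma>) n \<le> 2 ^ ?m * real_of_ereal (Var S \<rho>)" for n
  proof -
    have "var_approx_rel S (\<rho> @ \<sigma>) n \<le> (\<Sum>\<sigma>'\<in>level ?m. var_approx_rel S (\<rho> @ \<sigma>') n)"
      by (rule member_le_sum) (use \<open>\<sigma> \<in> level ?m\<close> finite_level var_approx_rel_nonneg in auto)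
    also have "\<dots> = 2 ^ ?m * (var_approx_rel S \<rho> (?m + n) - var_approx_rel S \<rho> ?m)"
      by (simp add: var_approx_rel_add[OF assms(1)])
    also have "\<dots> \<le> 2 ^ ?m * real_of_ereal (Var S \<rho>)"
      using incseq_le[OF incseq_var_approx_rel[OF assms(1)] var_approx_rel_tendsto_Var[OF assms], of "?m + n"]
        var_approx_rel_nonneg[of S \<rho> ?m] by simp
    finally show ?thesis .
  qed
  then have "Var S (\<rho> @ \<sigma>) \<le> ereal (2 ^ ?m * real_of_ereal (Var S \<rho>))"
    unfolding Var_eq_SUP[OF assms(1)] by (intro SUP_least) simp
  then show ?thesis
    by (rule order.strict_trans1) simp
qed

lemma sum_Var_level:
  assumes "martingale S" "Var S \<rho> < \<infinity>"
  shows "(\<Sum>\<sigma>\<in>level m. real_of_ereal (Var S (\<rho> @ \<sigma>)))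
       = 2 ^ m * (real_of_ereal (Var S \<rho>) - var_approx_rel S \<rho> m)"
proof -
  have "(\<lambda>n. \<Sum>\<sigma>\<in>level m. var_approx_rel S (\<rho> @ \<sigma>) n)
      = (\<lambda>n. 2 ^ m * (var_approx_rel S \<rho> (n + m) - var_approx_rel S \<rho> m))"
    by (simp add: add.commute[of _ m] var_approx_rel_add[OF assms(1)])
  moreover have "(\<lambda>n. \<Sum>\<sigma>\<in>level m. var_approx_rel S (\<rho> @ \<sigma>) n)
      \<longlonglongrightarrow> (\<Sum>\<sigma>\<in>level m. real_of_ereal (Var S (\<rho> @ \<sigma>)))"
    using assms by (intro tendsto_sum var_approx_rel_tendsto_Var Var_append_finite)
  ultimately have "(\<lambda>n. 2 ^ m * (var_approx_rel S \<rho> (n + m) - var_approx_rel S \<rho> m))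
      \<longlonglongrightarrow> (\<Sum>\<sigma>\<in>level m. real_of_ereal (Var S (\<rho> @ \<sigma>)))"
    by simp
  moreover have "(\<lambda>n. 2 ^ m * (var_approx_rel S \<rho> (n + m) - var_approx_rel S \<rho> m))
      \<longlonglongrightarrow> 2 ^ m * (real_of_ereal (Var S \<rho>) - var_approx_rel S \<rho> m)"
    using LIMSEQ_ignore_initial_segment[OF var_approx_rel_tendsto_Var[OF assms]]
    by (intro tendsto_intros)
  ultimately show ?thesis
    by (rule LIMSEQ_unique)
qed

lemma sum_sqrt_le:
  fixes x :: "'a \<Rightarrow> real"
  assumes "\<And>i. i \<in> A \<Longrightarrow> 0 \<le> x i"
  shows "(\<Sum>i\<in>A. sqrt (x i)) \<le> sqrt (card A * (\<Sum>i\<in>A. x i))"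
proof -
  have "(\<Sum>i\<in>A. (sqrt (x i))\<^sup>2) = (\<Sum>i\<in>A. x i)"
    using assms by (intro sum.cong) auto
  then have L2_sqrt: "L2_set (\<lambda>i. sqrt (x i)) A = sqrt (\<Sum>i\<in>A. x i)"
    by (simp add: L2_set_def)
  have "(\<Sum>i\<in>A. sqrt (x i)) = (\<Sum>i\<in>A. \<bar>sqrt (x i)\<bar> * \<bar>1\<bar>)"
    using assms by (intro sum.cong) auto
  also have "\<dots> \<le> L2_set (\<lambda>i. sqrt (x i)) A * L2_set (\<lambda>_. 1) A"
    by (rule L2_set_mult_ineq)
  also have "\<dots> = sqrt (card A * (\<Sum>i\<in>A. x i))"
    by (simp only: L2_sqrt) (simp add: L2_set_def real_sqrt_mult mult.commute)
  finally show ?thesis .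
qed

lemma mean_sqrt_Var_level_le:
  assumes "martingale S" "Var S \<rho> < \<infinity>"
  shows "(\<Sum>\<sigma>\<in>level m. sqrt (real_of_ereal (Var S (\<rho> @ \<sigma>)))) / 2 ^ m
       \<le> sqrt (real_of_ereal (Var S \<rho>) - var_approx_rel S \<rho> m)"
proof -
  have "(\<Sum>\<sigma>\<in>level m. sqrt (real_of_ereal (Var S (\<rho> @ \<sigma>))))
      \<le> sqrt (2 ^ m * (2 ^ m * (real_of_ereal (Var S \<rho>) - var_approx_rel S \<rho> m)))"
    using sum_sqrt_le[of "level m" "\<lambda>\<sigma>. real_of_ereal (Var S (\<rho> @ \<sigma>))"]
    by (simp add: Var_nonneg[OF assms(1)] real_of_ereal_pos card_level sum_Var_level[OF assms])
  also have "\<dots> = 2 ^ m * sqrt (real_of_ereal (Var S \<rho>) - var_approx_rel S \<rho> m)"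
    by (simp only: mult.assoc[symmetric] real_sqrt_mult real_sqrt_mult_self) simp
  finally show ?thesis
    by (simp add: divide_le_eq mult.commute)
qed

definition level_martingale :: "nat \<Rightarrow> (bool list \<Rightarrow> real) \<Rightarrow> bool list \<Rightarrow> real" where
  "level_martingale t g \<rho> = (\<Sum>\<tau>\<in>level (t - length \<rho>). g (take t (\<rho> @ \<tau>))) / 2 ^ (t - length \<rho>)"

lemma level_martingale_at_level: "length \<rho> = t \<Longrightarrow> level_martingale t g \<rho> = g \<rho>"
  by (simp add: level_martingale_def level_0)

lemma level_martingale_Nil: "level_martingale t g [] = (\<Sum>\<sigma>\<in>level t. g \<sigma>) / 2 ^ t"
proof -
  have "(\<Sum>\<sigma>\<in>level t. g (take t \<sigma>)) = (\<Sum>\<sigma>\<in>level t. g \<sigma>)"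
    by (rule sum.cong) (auto simp: level_def)
  then show ?thesis
    by (simp add: level_martingale_def)
qed

lemma level_martingale_pos:
  assumes "\<And>\<sigma>. 0 < g \<sigma>"
  shows "0 < level_martingale t g \<rho>"
proof -
  have "level (t - length \<rho>) \<noteq> {}"
    using card_level[of "t - length \<rho>"] by auto
  then show ?thesis
    unfolding level_martingale_def using assms finite_level by (intro divide_pos_pos sum_pos) auto
qed

lemma martingale_level_martingale:
  assumes "\<And>\<sigma>. 0 \<le> g \<sigma>"
  shows "martingale (level_martingale t g)"
  unfolding martingale_def
proof (intro conjI allI)
  fix \<rho>
  show "0 \<le> level_martingale t g \<rho>"
    unfolding level_martingale_def using assms by (simp add: sum_nonneg)
  show "2 * level_martingale t g \<rho>
      = level_martingale t g (\<rho> @ [False]) + level_martingale t g (\<rho> @ [True])"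
  proof (cases "length \<rho> < t")
    case True
    define k where "k = t - Suc (length \<rho>)"
    have k: "t - length \<rho> = Suc 0 + k" "t - length (\<rho> @ [b]) = k" for b
      using True by (auto simp: k_def)
    have parent: "level_martingale t g \<rho>
        = ((\<Sum>\<tau>\<in>level k. g (take t (\<rho> @ [False] @ \<tau>)))
          + (\<Sum>\<tau>\<in>level k. g (take t (\<rho> @ [True] @ \<tau>)))) / 2 ^ Suc k"
      unfolding level_martingale_def k(1) sum_level_add sum_level_Suc_0 by (simp add: sum.distrib)
    have child: "level_martingale t g (\<rho> @ [b]) = (\<Sum>\<tau>\<in>level k. g (take t (\<rho> @ [b] @ \<tau>))) / 2 ^ k" for b
      unfolding level_martingale_def k(2) by simp
    show ?thesis
      unfolding parent child by (simp add: add_divide_distrib)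
  next
    case False
    then show ?thesis
      by (simp add: level_martingale_def level_0)
  qed
qed

lemma level_martingale_sqrt_Var_Nil:
  assumes "martingale S" "Var S [] < \<infinity>" "0 \<le> b"
  shows "level_martingale t (\<lambda>\<sigma>. a + b * sqrt (real_of_ereal (Var S \<sigma>))) []
       \<le> a + b * sqrt (real_of_ereal (Var S []) - var_approx_rel S [] t)"
proof -
  have "level_martingale t (\<lambda>\<sigma>. a + b * sqrt (real_of_ereal (Var S \<sigma>))) []
      = a + b * ((\<Sum>\<sigma>\<in>level t. sqrt (real_of_ereal (Var S ([] @ \<sigma>)))) / 2 ^ t)"
    by (simp add: level_martingale_Nil sum.distrib sum_distrib_left card_level add_divide_distrib)
  also have "\<dots> \<le> a + b * sqrt (real_of_ereal (Var S []) - var_approx_rel S [] t)"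
    using mult_left_mono[OF mean_sqrt_Var_level_le[OF assms(1,2), of t] assms(3)] by simp
  finally show ?thesis .
qed

theorem lemma3p4:
  fixes S' :: "bool list \<Rightarrow> real" and c chat :: real
  assumes "martingale S'"
    and "Var S' [] < \<infinity>"
    and "c > S' []"
    and "chat \<ge> 0"
  shows "\<exists>S. martingale S \<and> S [] < c \<and> (\<forall>\<rho>. S \<rho> > S' \<rho>) \<and>
           (\<exists>t::nat. \<forall>\<rho>. length \<rho> = t \<longrightarrow>
              S \<rho> > S' \<rho> + chat * sqrt (real_of_ereal (Var S' \<rho>)))"
proof -
  define \<epsilon> where "\<epsilon> = c - S' []"
  have "0 < \<epsilon>"
    using assms(3) by (simp add: \<epsilon>_def)
  have "(\<lambda>n. chat * sqrt (real_of_ereal (Var S' []) - var_approx_rel S' [] n)) \<longlonglongrightarrow> 0"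
    using var_approx_rel_tendsto_Var[OF assms(1,2)] by (auto intro!: tendsto_eq_intros)
  then have "\<forall>\<^sub>F n in sequentially. chat * sqrt (real_of_ereal (Var S' []) - var_approx_rel S' [] n) < \<epsilon> / 2"
    by (rule order_tendstoD) (simp add: \<open>0 < \<epsilon>\<close>)
  then obtain t where t: "chat * sqrt (real_of_ereal (Var S' []) - var_approx_rel S' [] t) < \<epsilon> / 2"
    by (auto simp: eventually_sequentially)
  define f where "f = (\<lambda>\<sigma>. \<epsilon> / 2 + chat * sqrt (real_of_ereal (Var S' \<sigma>)))"
  have f_pos: "0 < f \<sigma>" for \<sigma>
    unfolding f_def using \<open>0 < \<epsilon>\<close> assms(4) real_of_ereal_pos[OF Var_nonneg[OF assms(1)]]
    by (intro add_pos_nonneg mult_nonneg_nonneg) auto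
  have root: "level_martingale t f [] < \<epsilon>"
    using level_martingale_sqrt_Var_Nil[OF assms(1,2,4), of t "\<epsilon> / 2"] t unfolding f_def by linarith
  define S where "S \<rho> = S' \<rho> + level_martingale t f \<rho>" for \<rho>
  have "martingale S"
    unfolding S_def using assms(1) f_pos by (intro martingale_add martingale_level_martingale less_imp_le)
  moreover have "S [] < c"
    using root by (simp add: S_def \<epsilon>_def)
  moreover have "\<forall>\<rho>. S' \<rho> < S \<rho>"
    by (simp add: S_def level_martingale_pos f_pos)
  moreover have "\<forall>\<rho>. length \<rho> = t \<longrightarrow> S' \<rho> + chat * sqrt (real_of_ereal (Var S' \<rho>)) < S \<rho>"
    using \<open>0 < \<epsilon>\<close> by (simp add: S_def level_martingale_at_level f_def)
  ultimately show ?thesis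
    by blast
qed

end
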